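(* For every fixed integer $k\ge 2$ and every fixed $\epsilon>0$ there is a polynomial-time algorithm that, given any normalized $k$-ary string $s$ (say fully $k'$-ary for some $k'\le k$), computes a sequence of flips transforming $s$ into a string of length $k'$ using at most $(1+\epsilon)\,d_{\rm g}(s)$ flips.
   Context: Strings are finite words over $\{0,1,2,\dots\}$; a $k$-ary string uses only symbols from $\{0,\dots,k-1\}$. A string is \emph{normalized} if no two adjacent symbols are equal; the \emph{normalization} of a string replaces every maximal run of identical symbols by a single copy. A string is \emph{fully $k$-ary} if the set of symbols occurring in it is exactly $\{0,\dots,k-1\}$. For a normalized string $s=s_1\cdots s_n$ and $1\le i\le n$, the flip $f^{(i)}(s)$ is the normalization of $s_i\cdots s_1 s_{i+1}\cdots s_n$. The grouping distance $d_{\rm g}(s)$ of a normalized fully $k'$-ary string is the minimum number of flips needed to transform $s$ into a string of length $k'$. *)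

theory Defs
  imports Complex_Main
begin

definition normalized :: "nat list \<Rightarrow> bool" where
  "normalized s \<longleftrightarrow> (\<forall>i. Suc i < length s \<longrightarrow> s ! i \<noteq> s ! Suc i)"

definition normalize :: "nat list \<Rightarrow> nat list" where
  "normalize s = remdups_adj s"

definition fully_kary :: "nat \<Rightarrow> nat list \<Rightarrow> bool" where
  "fully_kary k s \<longleftrightarrow> set s = {0..<k}"

text \<open>Flip with 1-based index i: reverse the prefix of length i, then normalize.\<close>
definition flip :: "nat \<Rightarrow> nat list \<Rightarrow> nat list" where
  "flip i s = normalize (rev (take i s) @ drop i s)"

fun flips :: "nat list \<Rightarrow> nat list \<Rightarrow> nat list option" where
  "flips [] s = Some s"
| "flips (i # is) s = (if 1 \<le> i \<and> i \<le> length s then flips is (flip i s) else None)"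

definition dg :: "nat list \<Rightarrow> nat" where
  "dg s = (LEAST m. \<exists>is t. length is = m \<and> flips is s = Some t \<and> length t = card (set s))"

datatype dir = Lft | Rgt | Stay

record tm =
  states :: "nat set"
  symbols :: "nat set"
  trans :: "nat \<Rightarrow> nat \<Rightarrow> (nat \<times> nat \<times> dir) option"
  start :: nat

text \<open>Symbol 0 is the blank. The machine halts when the transition is undefined.\<close>
definition wf_tm :: "tm \<Rightarrow> bool" where
  "wf_tm M \<longleftrightarrow> finite (states M) \<and> finite (symbols M) \<and> 0 \<in> symbols M \<and>
     start M \<in> states M \<and>
     (\<forall>q a. (q \<notin> states M \<or> a \<notin> symbols M) \<longrightarrow> trans M q a = None) \<and>
     (\<forall>q a q' b d. trans M q a = Some (q', b, d) \<longrightarrow> q' \<in> states M \<and> b \<in> symbols M)"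

text \<open>Configuration: (state, cells left of head in reverse order, cells from head rightwards).\<close>
type_synonym config = "nat \<times> nat list \<times> nat list"

definition head_sym :: "nat list \<Rightarrow> nat" where
  "head_sym rs = (case rs of [] \<Rightarrow> 0 | x # _ \<Rightarrow> x)"

definition step :: "tm \<Rightarrow> config \<Rightarrow> config" where
  "step M c = (case c of (q, ls, rs) \<Rightarrow>
     (case trans M q (head_sym rs) of
        None \<Rightarrow> c
      | Some (q', b, d) \<Rightarrow>
          (case d of
             Stay \<Rightarrow> (q', ls, b # tl rs)
           | Rgt \<Rightarrow> (q', b # ls, tl rs)
           | Lft \<Rightarrow> (case ls of [] \<Rightarrow> (q', [], b # tl rs)
                              | l # ls' \<Rightarrow> (q', ls', l # b # tl rs)))))"

definition halted :: "tm \<Rightarrow> config \<Rightarrow> bool" where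
  "halted M c = (case c of (q, ls, rs) \<Rightarrow> trans M q (head_sym rs) = None)"

definition init :: "tm \<Rightarrow> nat list \<Rightarrow> config" where
  "init M x = (start M, [], x)"

definition tape_output :: "config \<Rightarrow> nat list" where
  "tape_output c = (case c of (q, ls, rs) \<Rightarrow> takeWhile (\<lambda>a. a \<noteq> 0) rs)"

definition runs_within :: "tm \<Rightarrow> nat list \<Rightarrow> nat \<Rightarrow> nat list \<Rightarrow> bool" where
  "runs_within M x t y \<longleftrightarrow>
     (\<exists>n\<le>t. halted M ((step M ^^ n) (init M x)) \<and> tape_output ((step M ^^ n) (init M x)) = y)"

definition enc_string :: "nat list \<Rightarrow> nat list" where
  "enc_string s = map Suc s"

definition enc_flips :: "nat list \<Rightarrow> nat list" where
  "enc_flips is = concat (map (\<lambda>i. replicate i 1 @ [2]) is)"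

end

theory Submission
  imports Defs "HOL-Library.Countable" "HOL-Library.Sublist"
begin

text \<open>Read the string from left to right into a buffer of capacity \<open>K = k + m\<close>. When a symbol
  arrives at a full buffer, \<open>K\<close> flips gather the buffer, each merging its first symbol with the
  next copy or carrying it next to a block of distinct symbols, so that at most \<open>k + 1\<close> symbols
  remain; the final buffer is grouped optimally. This spends at most \<open>n (1 + k / m)\<close> flips on a
  string of length \<open>n\<close>, whereas a flip shortens a string by at most one, so that
  \<open>d\<^sub>g(s) \<ge> n - k\<close>; for \<open>m\<close> large compared with \<open>k / \<epsilon>\<close> the ratio is at most \<open>1 + \<epsilon>\<close>.
  The buffer ranges over a finite set, so the algorithm is a one-pass finite-state transducer,
  which a single-tape machine runs in quadratic time.\<close>

section \<open>Flips on normalized strings\<close>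

lemma normalized_iff_distinct_adj: "normalized s \<longleftrightarrow> distinct_adj s"
  by (simp add: normalized_def distinct_adj_conv_nth)

lemma flips_append: "flips (fs @ gs) s = Option.bind (flips fs s) (flips gs)"
  by (induction fs arbitrary: s) auto

lemma distinct_adj_take: "distinct_adj xs \<Longrightarrow> distinct_adj (take n xs)"
  by (metis append_take_drop_id distinct_adj_appendD1)

lemma distinct_adj_drop: "distinct_adj xs \<Longrightarrow> distinct_adj (drop n xs)"
  by (metis append_take_drop_id distinct_adj_appendD2)

lemma set_take_Un_set_drop [simp]: "set (take n xs) \<union> set (drop n xs) = set xs"
  by (metis append_take_drop_id set_append)

lemma remdups_adj_append_distinct_adj:
  assumes "distinct_adj xs" "distinct_adj ys"
  shows "remdups_adj (xs @ ys) =
    (if xs \<noteq> [] \<and> ys \<noteq> [] \<and> last xs = hd ys then xs @ tl ys else xs @ ys)"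
proof (cases "xs = []")
  case False
  have "dropWhile (\<lambda>y. y = last xs) ys = (if ys \<noteq> [] \<and> last xs = hd ys then tl ys else ys)"
    using assms(2) by (cases ys rule: remdups_adj.cases) (auto simp: distinct_adj_Cons)
  moreover have "remdups_adj (tl ys) = tl ys"
    using assms(2) by (cases ys) (auto simp: distinct_adj_altdef[symmetric] dest: distinct_adj_ConsD)
  ultimately show ?thesis
    using False assms by (auto simp: remdups_adj_append'' distinct_adj_altdef)
qed (use assms in \<open>simp add: distinct_adj_altdef\<close>)

lemma remdups_adj_Cons_append:
  assumes "distinct_adj (ys @ zs)" "ys \<noteq> []"
  shows "remdups_adj (a # ys @ zs) = remdups_adj (a # ys) @ zs"
proof -
  have "remdups_adj ys = ys" "remdups_adj (ys @ zs) = ys @ zs"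
    using assms(1) by (auto simp: distinct_adj_altdef[symmetric])
  then show ?thesis
    using assms(2) by (cases ys) auto
qed

lemma set_flip [simp]: "set (flip i s) = set s"
  by (simp add: flip_def normalize_def)

lemma distinct_adj_flip [simp]: "distinct_adj (flip i s)"
  by (simp add: flip_def normalize_def)

lemma length_flip_ge:
  assumes "distinct_adj s"
  shows "length s \<le> Suc (length (flip i s))"
proof -
  have "distinct_adj (rev (take i s))" "distinct_adj (drop i s)"
    using assms by (simp_all add: distinct_adj_take distinct_adj_drop)
  then show ?thesis
    by (auto simp: flip_def normalize_def remdups_adj_append_distinct_adj)
qed

lemma set_flips: "flips fs s = Some t \<Longrightarrow> set t = set s"
  by (induction fs arbitrary: s) (auto split: if_splits)

lemma distinct_adj_flips: "flips fs s = Some t \<Longrightarrow> distinct_adj s \<Longrightarrow> distinct_adj t"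
  by (induction fs arbitrary: s) (auto split: if_splits)

lemma length_flips_ge: "flips fs s = Some t \<Longrightarrow> distinct_adj s \<Longrightarrow> length s \<le> length t + length fs"
proof (induction fs arbitrary: s)
  case (Cons i fs)
  then have "flips fs (flip i s) = Some t" by (auto split: if_splits)
  with Cons.IH[of "flip i s"] length_flip_ge[OF Cons.prems(2), of i] show ?case by simp
qed simp

lemma flip_onto_next_occurrence:
  assumes "distinct_adj (a # xs)" "p < length xs" "xs ! p = a"
  shows "flip (Suc p) (a # xs) = rev (take p xs) @ drop p xs"
proof -
  have drop: "drop p xs = a # drop (Suc p) xs"
    using assms(2,3) Cons_nth_drop_Suc[of p xs] by simp
  have "distinct_adj (rev (take p xs) @ [a])"
    using distinct_adj_take[OF assms(1), of "Suc p"] distinct_adj_rev[of "a # take p xs"] by simp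
  moreover have "distinct_adj (drop p xs)"
    using assms(1) by (simp add: distinct_adj_drop distinct_adj_ConsD)
  ultimately
  have "remdups_adj ((rev (take p xs) @ [a]) @ drop p xs) = (rev (take p xs) @ [a]) @ tl (drop p xs)"
    using drop by (subst remdups_adj_append_distinct_adj) auto
  then show ?thesis
    using drop by (simp add: flip_def normalize_def)
qed

lemma flip_whole_prefix:
  assumes "distinct_adj (a # xs)"
  shows "flip (Suc (length xs)) (a # xs @ ys) = rev xs @ remdups_adj (a # ys)"
proof -
  have "remdups_adj (rev xs @ [a]) = rev xs @ [a]"
    using assms distinct_adj_rev[of "a # xs"] by (simp add: distinct_adj_altdef)
  then have "remdups_adj (rev xs @ a # ys) = rev xs @ remdups_adj (a # ys)"
    by (subst remdups_adj_append) (metis append.assoc append_Cons append_Nil remdups_adj_Cons_alt)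
  then show ?thesis
    by (simp add: flip_def normalize_def)
qed

section \<open>Greedy grouping\<close>

fun index_of :: "'a \<Rightarrow> 'a list \<Rightarrow> nat" where
  "index_of a [] = 0"
| "index_of a (x # xs) = (if x = a then 0 else Suc (index_of a xs))"

lemma index_of_less_length: "a \<in> set xs \<Longrightarrow> index_of a xs < length xs"
  by (induction xs) auto

lemma nth_index_of: "a \<in> set xs \<Longrightarrow> xs ! index_of a xs = a"
  by (induction xs) auto

text \<open>In \<open>gather W T\<close> the block \<open>T\<close> collects the grouped symbols: each flip removes
  the head \<open>a\<close> of \<open>W\<close>, either by merging it with its next occurrence in \<open>W\<close> or, if there
  is none, by carrying it next to \<open>T\<close>.\<close>

function gather :: "'a list \<Rightarrow> 'a list \<Rightarrow> nat list \<times> 'a list" where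
  "gather [] T = ([], T)"
| "gather (a # W) T =
    (if a \<in> set W
     then apfst ((#) (Suc (index_of a W))) (gather (rev (take (index_of a W) W) @ drop (index_of a W) W) T)
     else apfst ((#) (Suc (length W))) (gather (rev W) (remdups_adj (a # T))))"
  by pat_completeness auto
termination
  by (relation "measure (\<lambda>(W, T). length W)") auto

lemma length_fst_gather: "length (fst (gather W T)) = length W"
  by (induction W T rule: gather.induct) auto

lemma set_snd_gather: "set (snd (gather W T)) = set W \<union> set T"
  by (induction W T rule: gather.induct) auto

lemma length_snd_gather_le: "length (snd (gather W T)) \<le> length T + card (set W)"
proof (induction W T rule: gather.induct)
  case (2 a W T)
  then show ?case
    using remdups_adj_length[of "a # T"] by (auto simp: card_insert_if)
qed simp

lemma distinct_snd_gather: "distinct T \<Longrightarrow> set T \<inter> set W = {} \<Longrightarrow> distinct (snd (gather W T))"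
proof (induction W T rule: gather.induct)
  case (2 a W T)
  then show ?case
    by (auto simp: remdups_adj_distinct)
qed simp

lemma flips_gather:
  "distinct_adj (W @ T @ r) \<Longrightarrow> T \<noteq> [] \<or> r = [] \<Longrightarrow>
     flips (fst (gather W T)) (W @ T @ r) = Some (snd (gather W T) @ r)"
proof (induction W T rule: gather.induct)
  case (2 a W T)
  show ?case
  proof (cases "a \<in> set W")
    case True
    define p where "p = index_of a W"
    have p: "p < length W" "W ! p = a"
      using True by (simp_all add: p_def index_of_less_length nth_index_of)
    then have flip: "flip (Suc p) (a # W @ T @ r) = (rev (take p W) @ drop p W) @ T @ r"
      using flip_onto_next_occurrence[of a "W @ T @ r" p] "2.prems"(1) by (simp add: nth_append)
    then have "distinct_adj ((rev (take p W) @ drop p W) @ T @ r)"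
      by (metis distinct_adj_flip)
    with "2.IH"(1)[OF True] "2.prems"(2) flip p True show ?thesis
      by (simp add: p_def)
  next
    case False
    have "remdups_adj (a # T @ r) = remdups_adj (a # T) @ r"
      using "2.prems" remdups_adj_Cons_append[of T r a] distinct_adj_appendD2[of "a # W" "T @ r"]
      by (cases "T = []") auto
    then have flip: "flip (Suc (length W)) (a # W @ T @ r) = rev W @ remdups_adj (a # T) @ r"
      using flip_whole_prefix[of a W "T @ r"] "2.prems"(1) by (simp add: distinct_adj_appendD1)
    then have "distinct_adj (rev W @ remdups_adj (a # T) @ r)"
      by (metis distinct_adj_flip)
    with "2.IH"(2)[OF False] flip False show ?thesis
      by simp
  qed
qed simp

definition groups :: "nat list \<Rightarrow> nat list \<Rightarrow> bool" where
  "groups fs s \<longleftrightarrow> (\<exists>u. flips fs s = Some u \<and> length u = card (set s))"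

lemma groups_gather: "distinct_adj s \<Longrightarrow> groups (fst (gather s [])) s"
  using flips_gather[of s "[]" "[]"] distinct_snd_gather[of "[]" s] set_snd_gather[of s "[]"]
  by (simp add: groups_def) (metis distinct_card)

lemma groups_append: "flips fs s = Some t \<Longrightarrow> groups gs t \<Longrightarrow> groups (fs @ gs) s"
  by (auto simp: groups_def flips_append dest: set_flips)

lemma dg_eq_Least_groups: "dg s = (LEAST m. \<exists>fs. length fs = m \<and> groups fs s)"
  unfolding dg_def groups_def by (intro arg_cong[where f = Least] ext) auto

lemma dg_le_length: "distinct_adj s \<Longrightarrow> dg s \<le> length s"
  unfolding dg_eq_Least_groups
  by (rule Least_le) (use groups_gather length_fst_gather in blast)

definition optimal_grouping :: "nat list \<Rightarrow> nat list" where
  "optimal_grouping s = (SOME fs. length fs = dg s \<and> groups fs s)"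

lemma optimal_grouping_correct:
  assumes "distinct_adj s"
  shows "length (optimal_grouping s) = dg s \<and> groups (optimal_grouping s) s"
proof -
  have "\<exists>fs. length fs = dg s \<and> groups fs s"
    unfolding dg_eq_Least_groups by (rule LeastI_ex) (use assms groups_gather in blast)
  then show ?thesis
    unfolding optimal_grouping_def by (rule someI_ex)
qed

lemma length_le_dg_plus_card: "distinct_adj s \<Longrightarrow> length s \<le> dg s + card (set s)"
  using optimal_grouping_correct[of s] length_flips_ge[of "optimal_grouping s" s]
  by (auto simp: groups_def)

section \<open>The buffered approximation\<close>

definition buffer_step :: "nat \<Rightarrow> nat list \<Rightarrow> nat \<Rightarrow> nat list \<times> nat list" where
  "buffer_step K X c = (if length X < K then ([], X @ [c]) else gather X [c])"

fun buffered :: "nat \<Rightarrow> nat list \<Rightarrow> nat list \<Rightarrow> nat list \<times> nat list" where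
  "buffered K X [] = ([], X)"
| "buffered K X (c # r) =
    apfst ((@) (fst (buffer_step K X c))) (buffered K (snd (buffer_step K X c)) r)"

definition buffered_grouping :: "nat \<Rightarrow> nat list \<Rightarrow> nat list" where
  "buffered_grouping K s = fst (buffered K [] s) @ optimal_grouping (snd (buffered K [] s))"

lemma set_snd_buffer_step: "set (snd (buffer_step K X c)) = insert c (set X)"
  by (auto simp: buffer_step_def set_snd_gather)

lemma flips_buffered:
  "distinct_adj (X @ r) \<Longrightarrow> flips (fst (buffered K X r)) (X @ r) = Some (snd (buffered K X r))"
proof (induction r arbitrary: X)
  case (Cons c r)
  have step: "flips (fst (buffer_step K X c)) (X @ c # r) = Some (snd (buffer_step K X c) @ r)"
    using Cons.prems flips_gather[of X "[c]" r] by (simp add: buffer_step_def)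
  then have "distinct_adj (snd (buffer_step K X c) @ r)"
    using Cons.prems distinct_adj_flips by blast
  with Cons.IH step show ?case
    by (simp add: flips_append)
qed simp

lemma buffered_short: "length X + length r \<le> K \<Longrightarrow> buffered K X r = ([], X @ r)"
  by (induction r arbitrary: X) (auto simp: buffer_step_def)

lemma buffer_step_bound:
  assumes "length X \<le> K" "card (set X) \<le> k" "k < K"
  shows "length (snd (buffer_step K X c)) \<le> K"
    and "(K - k) * length (fst (buffer_step K X c)) + K * length (snd (buffer_step K X c))
           \<le> K * (length X + 1)"
proof -
  have gathered: "length (snd (gather X [c])) \<le> k + 1"
    using length_snd_gather_le[of X "[c]"] assms(2) by simp
  then show "length (snd (buffer_step K X c)) \<le> K"
    using assms by (auto simp: buffer_step_def)
  have "(K - k) * K + K * length (snd (gather X [c])) \<le> (K - k) * K + K * (k + 1)"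
    using mult_le_mono2[OF gathered, of K] by simp
  also have "\<dots> = K * (K + 1)"
    using assms(3) by (simp add: algebra_simps)
  finally show "(K - k) * length (fst (buffer_step K X c)) + K * length (snd (buffer_step K X c))
      \<le> K * (length X + 1)"
    using assms(1) by (auto simp: buffer_step_def length_fst_gather)
qed

text \<open>The potential \<open>K\<close> per buffered symbol pays for the flips, at rate \<open>K - k\<close> each.\<close>

lemma buffered_bound:
  assumes "length X \<le> K" "card (set X \<union> set r) \<le> k" "k < K"
  shows "(K - k) * length (fst (buffered K X r)) + K * length (snd (buffered K X r))
           \<le> K * (length X + length r)"
  using assms
proof (induction r arbitrary: X)
  case (Cons c r)
  let ?X' = "snd (buffer_step K X c)"
  have "card (set X) \<le> card (set X \<union> set (c # r))"
    by (rule card_mono) auto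
  with Cons.prems(2) have "card (set X) \<le> k"
    by linarith
  note step = buffer_step_bound[OF Cons.prems(1) this Cons.prems(3), of c]
  have "(K - k) * length (fst (buffered K ?X' r)) + K * length (snd (buffered K ?X' r))
      \<le> K * (length ?X' + length r)"
    using Cons.IH[of ?X'] step(1) Cons.prems(2,3) by (simp add: set_snd_buffer_step)
  with step(2) show ?case
    by (simp add: algebra_simps)
qed simp

lemma groups_buffered_grouping: "distinct_adj s \<Longrightarrow> groups (buffered_grouping K s) s"
  using flips_buffered[of "[]" s K] optimal_grouping_correct distinct_adj_flips
  by (auto simp: buffered_grouping_def intro: groups_append)

lemma length_buffered_grouping_short:
  "distinct_adj s \<Longrightarrow> length s \<le> K \<Longrightarrow> length (buffered_grouping K s) = dg s"
  using buffered_short[of "[]" s K] optimal_grouping_correct by (simp add: buffered_grouping_def)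

lemma length_buffered_grouping_le:
  assumes "distinct_adj s" "card (set s) \<le> k" "k < K"
  shows "(K - k) * length (buffered_grouping K s) \<le> K * length s"
proof -
  define F where "F = fst (buffered K [] s)"
  define X where "X = snd (buffered K [] s)"
  have "distinct_adj X"
    using flips_buffered[of "[]" s K] assms(1) distinct_adj_flips by (simp add: X_def)
  then have "length (buffered_grouping K s) \<le> length F + length X"
    using optimal_grouping_correct dg_le_length by (simp add: buffered_grouping_def F_def X_def)
  then have "(K - k) * length (buffered_grouping K s) \<le> (K - k) * length F + (K - k) * length X"
    by (metis add_mult_distrib2 mult_le_mono2)
  also have "\<dots> \<le> (K - k) * length F + K * length X"
    by simp
  also have "\<dots> \<le> K * length s"
    using buffered_bound[of "[]" K s k] assms(2,3) by (simp add: F_def X_def)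
  finally show ?thesis .
qed

lemma approximation_arith:
  fixes L n m k d \<epsilon> :: real
  assumes "0 < m" "0 \<le> k" "0 \<le> \<epsilon>" "m * L \<le> (k + m) * n"
    and "2 * k * (1 + \<epsilon>) \<le> \<epsilon> * m" "m \<le> n" "n - k \<le> d"
  shows "L \<le> (1 + \<epsilon>) * d"
proof -
  have "2 * k \<le> 2 * k * (1 + \<epsilon>)"
    using assms(2,3) mult_nonneg_nonneg[of k \<epsilon>] by (simp add: algebra_simps)
  with assms(5) have "2 * k \<le> \<epsilon> * m"
    by linarith
  then have "2 * (k * n) \<le> \<epsilon> * m * n"
    using mult_right_mono[of "2 * k" "\<epsilon> * m" n] assms(1,6) by simp
  moreover have "2 * (m * ((1 + \<epsilon>) * k)) \<le> \<epsilon> * m * n"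
    using mult_left_mono[OF assms(5), of m] mult_left_mono[OF assms(6), of "\<epsilon> * m"] assms(1,3)
    by (simp add: algebra_simps)
  ultimately have "m * L \<le> m * ((1 + \<epsilon>) * (n - k))"
    using assms(4) by (simp add: algebra_simps)
  then have "L \<le> (1 + \<epsilon>) * (n - k)"
    using assms(1) by simp
  also have "\<dots> \<le> (1 + \<epsilon>) * d"
    using assms(3,7) by (simp add: mult_left_mono)
  finally show ?thesis .
qed

lemma buffered_grouping_approximation:
  assumes "0 < \<epsilon>"
  obtains K where "k < K"
    and "\<And>s. distinct_adj s \<Longrightarrow> card (set s) \<le> k \<Longrightarrow>
           real (length (buffered_grouping K s)) \<le> (1 + \<epsilon>) * real (dg s)"
proof
  define m where "m = nat \<lceil>2 * real k * (1 + \<epsilon>) / \<epsilon>\<rceil> + 1"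
  have "2 * real k * (1 + \<epsilon>) / \<epsilon> \<le> real m"
    unfolding m_def by linarith
  then have m: "2 * real k * (1 + \<epsilon>) \<le> \<epsilon> * real m" "0 < m"
    using assms by (simp_all add: m_def divide_le_eq mult.commute)
  show "k < k + m"
    using m by simp
  fix s :: "nat list"
  assume s: "distinct_adj s" "card (set s) \<le> k"
  show "real (length (buffered_grouping (k + m) s)) \<le> (1 + \<epsilon>) * real (dg s)"
  proof (cases "length s \<le> k + m")
    case True
    then show ?thesis
      using assms s length_buffered_grouping_short by (simp add: algebra_simps)
  next
    case False
    have "m * length (buffered_grouping (k + m) s) \<le> (k + m) * length s"
      using length_buffered_grouping_le[OF s, of "k + m"] m by simp
    then have "real m * real (length (buffered_grouping (k + m) s)) \<le> (real k + real m) * real (length s)"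
      by (metis of_nat_add of_nat_le_iff of_nat_mult)
    moreover have "real (length s) - real k \<le> real (dg s)"
      using length_le_dg_plus_card[OF s(1)] s(2) by linarith
    ultimately show ?thesis
      using m False assms by (intro approximation_arith[of "real m" "real k" \<epsilon>]) simp_all
  qed
qed

section \<open>Turing machine runs\<close>

definition reaches :: "tm \<Rightarrow> config \<Rightarrow> nat \<Rightarrow> config \<Rightarrow> bool" where
  "reaches M c n c' \<longleftrightarrow> (step M ^^ n) c = c'"

lemma reaches_trans [trans]: "reaches M c m c' \<Longrightarrow> reaches M c' n c'' \<Longrightarrow> reaches M c (m + n) c''"
  unfolding reaches_def by (simp add: add.commute[of m n] funpow_add)

lemma reaches_steps_eq: "reaches M c n c' \<Longrightarrow> n = m \<Longrightarrow> reaches M c m c'"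
  by simp

lemma step_right:
  "trans M q (head_sym rs) = Some (q', b, Rgt) \<Longrightarrow> reaches M (q, ls, rs) 1 (q', b # ls, tl rs)"
  by (simp add: reaches_def step_def)

lemma step_stay:
  "trans M q (head_sym rs) = Some (q', b, Stay) \<Longrightarrow> reaches M (q, ls, rs) 1 (q', ls, b # tl rs)"
  by (simp add: reaches_def step_def)

lemma step_left:
  "trans M q (head_sym rs) = Some (q', b, Lft) \<Longrightarrow> reaches M (q, l # ls, rs) 1 (q', ls, l # b # tl rs)"
  by (simp add: reaches_def step_def)

lemma sweep_right:
  assumes "\<And>a. a \<in> set xs \<Longrightarrow> trans M q a = Some (q, a, Rgt)"
  shows "reaches M (q, ls, xs @ rs) (length xs) (q, rev xs @ ls, rs)"
  using assms
proof (induction xs arbitrary: ls)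
  case (Cons x xs)
  have "reaches M (q, ls, (x # xs) @ rs) 1 (q, x # ls, xs @ rs)"
    using Cons.prems step_right[of M q "(x # xs) @ rs" q x ls] by (simp add: head_sym_def)
  also have "reaches M (q, x # ls, xs @ rs) (length xs) (q, rev (x # xs) @ ls, rs)"
    using Cons by simp
  finally show ?case
    by simp
qed (simp add: reaches_def)

lemma sweep_left:
  assumes "\<And>a. a \<in> set xs \<Longrightarrow> trans M q a = Some (q, a, Lft)"
    and "trans M q (hd rs) = Some (q, hd rs, Lft)" "rs \<noteq> []"
  shows "reaches M (q, xs @ ls, rs) (length xs) (q, ls, rev xs @ rs)"
  using assms
proof (induction xs arbitrary: rs)
  case (Cons x xs)
  have "head_sym rs = hd rs"
    using Cons.prems(3) by (cases rs) (simp_all add: head_sym_def)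
  then have "reaches M (q, x # xs @ ls, rs) 1 (q, xs @ ls, x # rs)"
    using Cons.prems(2,3) step_left[of M q rs q "hd rs" x "xs @ ls"] by simp
  also have "reaches M (q, xs @ ls, x # rs) (length xs) (q, ls, rev xs @ x # rs)"
    using Cons by simp
  finally show ?case
    by simp
qed (simp add: reaches_def)

lemma tape_output_eq: "0 \<notin> set ys \<Longrightarrow> tape_output (q, ls, ys @ 0 # zs) = ys"
  by (induction ys) (auto simp: tape_output_def)

lemma runs_withinI:
  "reaches M (init M x) n c \<Longrightarrow> n \<le> t \<Longrightarrow> halted M c \<Longrightarrow> tape_output c = y \<Longrightarrow> runs_within M x t y"
  unfolding runs_within_def reaches_def by blast

section \<open>A machine for one-pass transducers\<close>

definition blank :: "nat list \<Rightarrow> bool" where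
  "blank zs \<longleftrightarrow> set zs \<subseteq> {0}"

lemma blank_Cons_0 [simp]: "blank (0 # zs) \<longleftrightarrow> blank zs"
  by (simp add: blank_def)

lemma blank_hd_tl: "blank zs \<Longrightarrow> head_sym zs = 0 \<and> blank (tl zs)"
  by (cases zs) (auto simp: blank_def head_sym_def)

datatype phase = Read "nat list" | Carry "nat list" "nat list" | Write "nat list option" "nat list"
  | Return "nat list" | Rewind | Halt

instance phase :: countable
  by countable_datatype

text \<open>Tape layout: input symbol \<open>a\<close> is stored as \<open>a + 1\<close>, consumed input is overwritten by the
  marker \<open>k + 1\<close>, and the input is followed by the separator \<open>k + 2\<close> and the output. \<open>Read X\<close>
  consumes a symbol, \<open>Carry\<close> and \<open>Write\<close> append the emitted word to the output, \<open>Return\<close> walks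
  back to the first unread cell and \<open>Rewind\<close> to the start of the output. The assumption
  \<open>k \<ge> 2\<close> keeps the markers apart from the output symbols \<open>1\<close> and \<open>2\<close>.\<close>

locale transducer =
  fixes k :: nat and Q :: "nat list set" and upd :: "nat list \<Rightarrow> nat \<Rightarrow> nat list"
    and emit :: "nat list \<Rightarrow> nat \<Rightarrow> nat list" and emit_final :: "nat list \<Rightarrow> nat list"
  assumes two_le_k: "2 \<le> k" and finite_Q: "finite Q" and Nil_in_Q: "[] \<in> Q"
    and upd_in_Q: "\<And>X c. X \<in> Q \<Longrightarrow> c < k \<Longrightarrow> upd X c \<in> Q"
    and set_emit: "\<And>X c. set (emit X c) \<subseteq> {1, 2}"
    and set_emit_final: "\<And>X. set (emit_final X) \<subseteq> {1, 2}"
begin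

abbreviation used :: nat where "used \<equiv> Suc k"
abbreviation sep :: nat where "sep \<equiv> Suc (Suc k)"

fun transduce :: "nat list \<Rightarrow> nat list \<Rightarrow> nat list" where
  "transduce X [] = emit_final X"
| "transduce X (c # r) = emit X c @ transduce (upd X c) r"

definition after_write :: "nat list option \<Rightarrow> phase" where
  "after_write nx = (case nx of None \<Rightarrow> Rewind | Some X \<Rightarrow> Return X)"

fun delta :: "phase \<Rightarrow> nat \<Rightarrow> (phase \<times> nat \<times> dir) option" where
  "delta (Read X) a =
     (if 1 \<le> a \<and> a \<le> k then Some (Carry (upd X (a - 1)) (emit X (a - 1)), used, Rgt)
      else if a = 0 \<or> a = sep then Some (Write None (emit_final X), sep, Rgt) else None)"
| "delta (Carry X ys) a =
     (if 1 \<le> a \<and> a \<le> k then Some (Carry X ys, a, Rgt)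
      else if a = 0 \<or> a = sep then Some (Write (Some X) ys, sep, Rgt) else None)"
| "delta (Write nx ys) a =
     (if a = 1 \<or> a = 2 then Some (Write nx ys, a, Rgt)
      else if a = 0 then
        (case ys of y # ys' \<Rightarrow> Some (Write nx ys', y, Rgt) | [] \<Rightarrow> Some (after_write nx, 0, Stay))
      else None)"
| "delta (Return X) a = (if a = used then Some (Read X, a, Rgt) else Some (Return X, a, Lft))"
| "delta Rewind a = (if a = sep then Some (Halt, a, Rgt) else Some (Rewind, a, Lft))"
| "delta Halt a = None"

definition symbols_used :: "nat set" where
  "symbols_used = {0..sep}"

definition words :: "nat list set" where
  "words = (\<lambda>(X, c). emit X c) ` (Q \<times> {..<k}) \<union> emit_final ` Q"

definition word_suffixes :: "nat list set" where
  "word_suffixes = (\<Union>w\<in>words. set (suffixes w))"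

definition phases :: "phase set" where
  "phases = Read ` Q \<union> Return ` Q \<union> (\<lambda>(X, w). Carry X w) ` (Q \<times> words)
     \<union> (\<lambda>(X, w). Write (Some X) w) ` (Q \<times> word_suffixes) \<union> Write None ` word_suffixes
     \<union> {Rewind, Halt}"

definition machine :: tm where
  "machine =
    \<lparr>states = to_nat ` phases, symbols = symbols_used,
     trans = (\<lambda>q a. if q \<in> to_nat ` phases \<and> a \<in> symbols_used
                    then map_option (\<lambda>(q', b, d). (to_nat q', b, d)) (delta (from_nat q) a)
                    else None),
     start = to_nat (Read [])\<rparr>"

lemma finite_words: "finite words"
  using finite_Q by (simp add: words_def)

lemma finite_phases: "finite phases"
  using finite_Q finite_words by (simp add: phases_def word_suffixes_def)

lemma emit_in_words: "X \<in> Q \<Longrightarrow> c < k \<Longrightarrow> emit X c \<in> words"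
  by (auto simp: words_def)

lemma emit_final_in_words: "X \<in> Q \<Longrightarrow> emit_final X \<in> words"
  by (simp add: words_def)

lemma words_in_suffixes: "w \<in> words \<Longrightarrow> w \<in> word_suffixes"
  unfolding word_suffixes_def by auto

lemma word_suffixes_tl: "y # ys \<in> word_suffixes \<Longrightarrow> ys \<in> word_suffixes"
  unfolding word_suffixes_def by (auto dest: suffix_ConsD)

lemma set_words: "w \<in> words \<Longrightarrow> set w \<subseteq> {1, 2}"
  unfolding words_def using set_emit set_emit_final by (fastforce dest: subsetD)

lemma set_word_suffixes: "w \<in> word_suffixes \<Longrightarrow> set w \<subseteq> {1, 2}"
  unfolding word_suffixes_def using set_words set_mono_suffix by fastforce

lemma phases_iff [simp]:
  "Read X \<in> phases \<longleftrightarrow> X \<in> Q" "Return X \<in> phases \<longleftrightarrow> X \<in> Q"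
  "Carry X w \<in> phases \<longleftrightarrow> X \<in> Q \<and> w \<in> words"
  "Write (Some X) w \<in> phases \<longleftrightarrow> X \<in> Q \<and> w \<in> word_suffixes"
  "Write None w \<in> phases \<longleftrightarrow> w \<in> word_suffixes" "Rewind \<in> phases" "Halt \<in> phases"
  by (auto simp: phases_def)

lemma symbols_used_iff [simp]: "a \<in> symbols_used \<longleftrightarrow> a \<le> sep"
  by (auto simp: symbols_used_def)

lemma delta_closed:
  assumes "q \<in> phases" "a \<le> sep" "delta q a = Some (q', b, d)"
  shows "q' \<in> phases \<and> b \<le> sep"
  using assms
proof (cases q)
  case (Read X)
  then show ?thesis
    using assms upd_in_Q emit_in_words emit_final_in_words words_in_suffixes by (auto split: if_splits)
next
  case (Carry X w)
  then show ?thesis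
    using assms words_in_suffixes by (auto split: if_splits)
next
  case (Write nx w)
  then show ?thesis
    using assms two_le_k set_word_suffixes[of w] word_suffixes_tl
    by (cases nx; cases w) (auto simp: after_write_def split: if_splits)
qed (auto split: if_splits)

lemma trans_machine_closed:
  assumes "trans machine q a = Some (q', b, d)"
  shows "q' \<in> states machine \<and> b \<in> symbols machine"
proof -
  have "q \<in> to_nat ` phases" "a \<le> sep"
    using assms unfolding machine_def by (simp_all split: if_splits)
  then obtain p where p: "p \<in> phases" "q = to_nat p" "a \<le> sep"
    by blast
  with assms obtain p' where "delta p a = Some (p', b, d)" "q' = to_nat p'"
    by (auto simp: machine_def)
  with p delta_closed have "p' \<in> phases \<and> b \<le> sep" "q' = to_nat p'"
    by blast+
  then show ?thesis
    by (simp add: machine_def)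
qed

lemma wf_machine: "wf_tm machine"
  unfolding wf_tm_def
proof (intro conjI allI impI)
  show "finite (states machine)"
    using finite_phases by (simp add: machine_def)
  show "start machine \<in> states machine"
    using Nil_in_Q by (simp add: machine_def)
next
  fix q a q' b d
  assume "trans machine q a = Some (q', b, d)"
  then show "q' \<in> states machine" "b \<in> symbols machine"
    using trans_machine_closed by blast+
next
  fix q a
  assume "q \<notin> states machine \<or> a \<notin> symbols machine"
  then show "trans machine q a = None"
    by (auto simp: machine_def)
qed (simp_all add: machine_def symbols_used_def)

lemma trans_machine:
  "q \<in> phases \<Longrightarrow> a \<le> sep \<Longrightarrow> delta q a = Some (q', b, d) \<Longrightarrow>
     trans machine (to_nat q) a = Some (to_nat q', b, d)"
  by (simp add: machine_def)

lemma machine_right: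
  "q \<in> phases \<Longrightarrow> head_sym rs \<le> sep \<Longrightarrow> delta q (head_sym rs) = Some (q', b, Rgt) \<Longrightarrow>
     reaches machine (to_nat q, ls, rs) 1 (to_nat q', b # ls, tl rs)"
  by (rule step_right) (rule trans_machine)

lemma machine_stay:
  "q \<in> phases \<Longrightarrow> head_sym rs \<le> sep \<Longrightarrow> delta q (head_sym rs) = Some (q', b, Stay) \<Longrightarrow>
     reaches machine (to_nat q, ls, rs) 1 (to_nat q', ls, b # tl rs)"
  by (rule step_stay) (rule trans_machine)

lemma machine_left:
  "q \<in> phases \<Longrightarrow> head_sym rs \<le> sep \<Longrightarrow> delta q (head_sym rs) = Some (q', b, Lft) \<Longrightarrow>
     reaches machine (to_nat q, l # ls, rs) 1 (to_nat q', ls, l # b # tl rs)"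
  by (rule step_left) (rule trans_machine)

text \<open>The part of the tape after the unread input; \<open>b = False\<close> before the separator is written.\<close>

definition tape_tail :: "bool \<Rightarrow> nat list \<Rightarrow> nat list \<Rightarrow> nat list" where
  "tape_tail b ou zs = (if b then sep # ou @ zs else [])"

lemma carry_input:
  assumes "Carry X w \<in> phases" "\<forall>a\<in>set r. a < k"
  shows "reaches machine (to_nat (Carry X w), ls, map Suc r @ rs) (length r)
           (to_nat (Carry X w), rev (map Suc r) @ ls, rs)"
proof -
  have "trans machine (to_nat (Carry X w)) a = Some (to_nat (Carry X w), a, Rgt)"
    if "a \<in> set (map Suc r)" for a
    using assms that by (auto intro!: trans_machine)
  then show ?thesis
    using sweep_right[of "map Suc r" machine "to_nat (Carry X w)" ls rs] by simp
qed

lemma enter_output: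
  assumes "q \<in> phases" "delta q 0 = Some (q', sep, Rgt)" "delta q sep = Some (q', sep, Rgt)"
    and "\<not> b \<longrightarrow> ou = [] \<and> zs = []"
  shows "reaches machine (to_nat q, ls, tape_tail b ou zs) 1 (to_nat q', sep # ls, ou @ zs)"
  using assms machine_right[of q "tape_tail b ou zs" q' sep ls]
  by (cases b) (simp_all add: tape_tail_def head_sym_def)

lemma write_word:
  assumes "Write nx w \<in> phases" "blank zs"
  shows "\<exists>zs'. blank zs' \<and> reaches machine (to_nat (Write nx w), ls, zs) (length w + 1)
           (to_nat (after_write nx), rev w @ ls, 0 # zs')"
  using assms
proof (induction w arbitrary: ls zs)
  case Nil
  then have "reaches machine (to_nat (Write nx []), ls, zs) 1 (to_nat (after_write nx), ls, 0 # tl zs)"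
    using machine_stay[of "Write nx []" zs "after_write nx" 0 ls] blank_hd_tl[of zs] by simp
  then show ?case
    using blank_hd_tl[OF Nil.prems(2)] by auto
next
  case (Cons y w)
  have "Write nx w \<in> phases"
    using Cons.prems(1) word_suffixes_tl by (cases nx) auto
  then obtain zs' where "blank zs'" and
    "reaches machine (to_nat (Write nx w), y # ls, tl zs) (length w + 1)
       (to_nat (after_write nx), rev w @ y # ls, 0 # zs')"
    using Cons.IH blank_hd_tl[OF Cons.prems(2)] by blast
  moreover have "reaches machine (to_nat (Write nx (y # w)), ls, zs) 1 (to_nat (Write nx w), y # ls, tl zs)"
    using machine_right[of "Write nx (y # w)" zs "Write nx w" y ls] Cons.prems blank_hd_tl[of zs] by simp
  ultimately show ?case
    using reaches_trans by fastforce
qed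

lemma append_output:
  assumes "Write nx w \<in> phases" "set ou \<subseteq> {1, 2}" "blank zs"
  shows "\<exists>zs'. blank zs' \<and> reaches machine (to_nat (Write nx w), ls, ou @ zs) (length ou + (length w + 1))
           (to_nat (after_write nx), rev (ou @ w) @ ls, 0 # zs')"
proof -
  have "trans machine (to_nat (Write nx w)) a = Some (to_nat (Write nx w), a, Rgt)" if "a \<in> set ou" for a
    using assms(1,2) that by (auto intro!: trans_machine)
  then have "reaches machine (to_nat (Write nx w), ls, ou @ zs) (length ou) (to_nat (Write nx w), rev ou @ ls, zs)"
    by (rule sweep_right)
  with write_word[OF assms(1,3), of "rev ou @ ls"] show ?thesis
    using reaches_trans by fastforce
qed

lemma return_to_marker:
  assumes "q \<in> phases" "q' \<in> phases" "m \<le> sep"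
    and "\<And>a. a \<in> set xs \<Longrightarrow> a \<le> sep \<and> delta q a = Some (q, a, Lft)"
    and "delta q 0 = Some (q, 0, Lft)" "delta q m = Some (q', m, Rgt)"
  shows "reaches machine (to_nat q, xs @ m # ls, 0 # zs) (length xs + 1 + 1) (to_nat q', m # ls, rev xs @ 0 # zs)"
proof -
  define h where "h = hd (rev xs @ 0 # zs)"
  have "h \<in> insert 0 (set xs)"
    by (cases xs rule: rev_cases) (auto simp: h_def)
  then have h: "h \<le> sep" "delta q h = Some (q, h, Lft)"
    using assms(4,5) by auto
  have head: "head_sym (rev xs @ 0 # zs) = h"
    by (cases "rev xs") (simp_all add: h_def head_sym_def)
  have "reaches machine (to_nat q, xs @ m # ls, 0 # zs) (length xs) (to_nat q, m # ls, rev xs @ 0 # zs)"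
    using sweep_left[of xs machine "to_nat q" "0 # zs" "m # ls"] assms by (auto intro: trans_machine)
  also have "reaches machine \<dots> 1 (to_nat q, ls, m # rev xs @ 0 # zs)"
    using machine_left[of q "rev xs @ 0 # zs" q h m ls] assms(1) h head
    by (cases "rev xs") (simp_all add: h_def)
  also have "reaches machine \<dots> 1 (to_nat q', m # ls, rev xs @ 0 # zs)"
    using machine_right[of q "m # rev xs @ 0 # zs" q' m ls] assms by (simp add: head_sym_def)
  finally show ?thesis .
qed

lemma consume_symbol:
  assumes "X \<in> Q" "c < k" "\<forall>a\<in>set r. a < k" "set ou \<subseteq> {1, 2}" "blank zs"
    and "\<not> b \<longrightarrow> ou = [] \<and> zs = []"
  shows "\<exists>zs'. blank zs' \<and>
    reaches machine (to_nat (Read X), ls, map Suc (c # r) @ tape_tail b ou zs)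
      (2 * length r + 2 * length ou + 2 * length (emit X c) + 6)
      (to_nat (Read (upd X c)), used # ls, map Suc r @ tape_tail True (ou @ emit X c) zs')"
proof -
  let ?w = "emit X c" and ?X' = "upd X c" and ?ls = "rev (map Suc r) @ used # ls"
  have X': "?X' \<in> Q" "?w \<in> words"
    using assms(1,2) upd_in_Q emit_in_words by auto
  then obtain zs' where "blank zs'" and written:
    "reaches machine (to_nat (Write (Some ?X') ?w), sep # ?ls, ou @ zs) (length ou + (length ?w + 1))
       (to_nat (Return ?X'), rev (ou @ ?w) @ sep # ?ls, 0 # zs')"
    using append_output[of "Some ?X'" ?w ou zs "sep # ?ls"] assms(4,5) words_in_suffixes
    by (auto simp: after_write_def)
  have "reaches machine (to_nat (Read X), ls, map Suc (c # r) @ tape_tail b ou zs) 1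
      (to_nat (Carry ?X' ?w), used # ls, map Suc r @ tape_tail b ou zs)"
    using machine_right[of "Read X" "map Suc (c # r) @ tape_tail b ou zs"] assms(1,2)
    by (simp add: head_sym_def)
  also have "reaches machine \<dots> (length r) (to_nat (Carry ?X' ?w), ?ls, tape_tail b ou zs)"
    using carry_input X' assms(3) by simp
  also have "reaches machine \<dots> 1 (to_nat (Write (Some ?X') ?w), sep # ?ls, ou @ zs)"
    using enter_output[of "Carry ?X' ?w"] X' words_in_suffixes assms(6) by simp
  also note written
  also have "reaches machine (to_nat (Return ?X'), rev (ou @ ?w) @ sep # ?ls, 0 # zs')
      (length ou + length ?w + length r + 1 + 1 + 1)
      (to_nat (Read ?X'), used # ls, map Suc r @ sep # ou @ ?w @ 0 # zs')"
  proof -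
    let ?xs = "rev (ou @ ?w) @ sep # rev (map Suc r)"
    have "reaches machine (to_nat (Return ?X'), ?xs @ used # ls, 0 # zs') (length ?xs + 1 + 1)
        (to_nat (Read ?X'), used # ls, rev ?xs @ 0 # zs')"
      by (rule return_to_marker) (use X' assms(3,4) set_words[of ?w] two_le_k in auto)
    then show ?thesis
      by (simp add: ac_simps)
  qed
  finally have "reaches machine (to_nat (Read X), ls, map Suc (c # r) @ tape_tail b ou zs)
      (2 * length r + 2 * length ou + 2 * length ?w + 6)
      (to_nat (Read ?X'), used # ls, map Suc r @ sep # ou @ ?w @ 0 # zs')"
    by (rule reaches_steps_eq) simp
  then show ?thesis
    using \<open>blank zs'\<close> by (intro exI[of _ "0 # zs'"]) (simp add: tape_tail_def)
qed

lemma emit_final_output: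
  assumes "X \<in> Q" "set ou \<subseteq> {1, 2}" "blank zs" "\<not> b \<longrightarrow> ou = [] \<and> zs = []"
  shows "\<exists>zs'. reaches machine (to_nat (Read X), ls, tape_tail b ou zs)
    (2 * length ou + 2 * length (emit_final X) + 4) (to_nat Halt, sep # ls, ou @ emit_final X @ 0 # zs')"
proof -
  let ?w = "emit_final X"
  have w: "?w \<in> words"
    using assms(1) emit_final_in_words by simp
  then obtain zs' where written:
    "reaches machine (to_nat (Write None ?w), sep # ls, ou @ zs) (length ou + (length ?w + 1))
       (to_nat Rewind, rev (ou @ ?w) @ sep # ls, 0 # zs')"
    using append_output[of None ?w ou zs "sep # ls"] assms(2,3) words_in_suffixes
    by (auto simp: after_write_def)
  have "reaches machine (to_nat (Read X), ls, tape_tail b ou zs) 1 (to_nat (Write None ?w), sep # ls, ou @ zs)"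
    using enter_output[of "Read X"] w words_in_suffixes assms(1,4) by simp
  also note written
  also have "reaches machine (to_nat Rewind, rev (ou @ ?w) @ sep # ls, 0 # zs') (length ou + length ?w + 1 + 1)
      (to_nat Halt, sep # ls, ou @ ?w @ 0 # zs')"
  proof -
    have "reaches machine (to_nat Rewind, rev (ou @ ?w) @ sep # ls, 0 # zs') (length (rev (ou @ ?w)) + 1 + 1)
        (to_nat Halt, sep # ls, rev (rev (ou @ ?w)) @ 0 # zs')"
      by (rule return_to_marker) (use assms(2) set_words[OF w] two_le_k in auto)
    then show ?thesis
      by (simp add: ac_simps)
  qed
  finally have "reaches machine (to_nat (Read X), ls, tape_tail b ou zs) (2 * length ou + 2 * length ?w + 4)
      (to_nat Halt, sep # ls, ou @ ?w @ 0 # zs')"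
    by (rule reaches_steps_eq) simp
  then show ?thesis
    by blast
qed

definition max_word :: nat where
  "max_word = Max (length ` words)"

lemma length_word_le: "w \<in> words \<Longrightarrow> length w \<le> max_word"
  unfolding max_word_def using finite_words by (auto intro: Max_ge)

definition run_time :: "nat \<Rightarrow> nat \<Rightarrow> nat" where
  "run_time n m = (n + 1) * (2 * n + 2 * m + 2 * max_word * (n + 1) + 7)"

lemma halted_Halt: "halted machine (to_nat Halt, ls, rs)"
  by (simp add: halted_def machine_def)

lemma run_machine:
  "X \<in> Q \<Longrightarrow> \<forall>a\<in>set r. a < k \<Longrightarrow> set ou \<subseteq> {1, 2} \<Longrightarrow> blank zs \<Longrightarrow> (\<not> b \<longrightarrow> ou = [] \<and> zs = []) \<Longrightarrow>
   \<exists>n c. n \<le> run_time (length r) (length ou) \<and>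
     reaches machine (to_nat (Read X), ls, map Suc r @ tape_tail b ou zs) n c \<and>
     halted machine c \<and> tape_output c = ou @ transduce X r"
proof (induction r arbitrary: X ls ou zs b)
  case Nil
  obtain zs' where run: "reaches machine (to_nat (Read X), ls, tape_tail b ou zs)
      (2 * length ou + 2 * length (emit_final X) + 4) (to_nat Halt, sep # ls, ou @ emit_final X @ 0 # zs')"
    using emit_final_output Nil.prems by blast
  have "0 \<notin> set (ou @ emit_final X)"
    using Nil.prems(3) set_emit_final[of X] by auto
  then have "tape_output (to_nat Halt, sep # ls, ou @ emit_final X @ 0 # zs') = ou @ emit_final X"
    using tape_output_eq[of "ou @ emit_final X"] by simp
  moreover have "2 * length ou + 2 * length (emit_final X) + 4 \<le> run_time 0 (length ou)"
    using length_word_le[OF emit_final_in_words[OF Nil.prems(1)]] by (simp add: run_time_def)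
  ultimately show ?case
    using run halted_Halt
    by (intro exI[of _ "2 * length ou + 2 * length (emit_final X) + 4"]
        exI[of _ "(to_nat Halt, sep # ls, ou @ emit_final X @ 0 # zs')"]) simp
next
  case (Cons c r)
  let ?w = "emit X c"
  have c: "c < k" "\<forall>a\<in>set r. a < k"
    using Cons.prems(2) by auto
  obtain zs' where "blank zs'" and consume:
    "reaches machine (to_nat (Read X), ls, map Suc (c # r) @ tape_tail b ou zs)
       (2 * length r + 2 * length ou + 2 * length ?w + 6)
       (to_nat (Read (upd X c)), used # ls, map Suc r @ tape_tail True (ou @ ?w) zs')"
    using consume_symbol[OF Cons.prems(1) c Cons.prems(3-5)] by blast
  have ou': "set (ou @ ?w) \<subseteq> {1, 2}"
    using Cons.prems(3) set_emit[of X c] by simp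
  obtain n' c' where n': "n' \<le> run_time (length r) (length (ou @ ?w))"
    and rest: "reaches machine (to_nat (Read (upd X c)), used # ls, map Suc r @ tape_tail True (ou @ ?w) zs') n' c'"
    and halted: "halted machine c'" and tape: "tape_output c' = (ou @ ?w) @ transduce (upd X c) r"
    using Cons.IH[OF upd_in_Q[OF Cons.prems(1) c(1)] c(2) ou' \<open>blank zs'\<close>, where b = True and ls = "used # ls"]
    by auto
  have "2 * length r + 2 * length ou + 2 * length ?w + 6 + run_time (length r) (length (ou @ ?w))
      \<le> run_time (length (c # r)) (length ou)"
  proof -
    have "length ?w \<le> max_word"
      using length_word_le emit_in_words Cons.prems(1) c(1) by blast
    then have "run_time (length r) (length (ou @ ?w)) \<le> run_time (length r) (length ou + max_word)"
      unfolding run_time_def by (intro mult_le_mono2) simp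
    moreover have "2 * length r + 2 * length ou + 2 * max_word + 6 + run_time (length r) (length ou + max_word)
        \<le> run_time (length (c # r)) (length ou)"
      by (simp add: run_time_def algebra_simps)
    ultimately show ?thesis
      using \<open>length ?w \<le> max_word\<close> by linarith
  qed
  then show ?case
    using reaches_trans[OF consume rest] n' halted tape
    by (intro exI[of _ "2 * length r + 2 * length ou + 2 * length ?w + 6 + n'"] exI[of _ c']) simp
qed

lemma run_time_bound: "run_time n 0 \<le> (6 * max_word + 11) * n ^ 2 + (6 * max_word + 11)"
proof -
  have "n \<le> n ^ 2"
    by (simp add: power2_eq_square)
  then have "(4 * max_word + 9) * n \<le> (4 * max_word + 9) * n ^ 2"
    by (rule mult_le_mono2)
  moreover have "run_time n 0 = (2 * max_word + 2) * n ^ 2 + (4 * max_word + 9) * n + (2 * max_word + 7)"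
    by (simp add: run_time_def power2_eq_square algebra_simps)
  moreover have "(6 * max_word + 11) * n ^ 2 = (2 * max_word + 2) * n ^ 2 + (4 * max_word + 9) * n ^ 2"
    by (simp add: algebra_simps)
  ultimately show ?thesis
    by linarith
qed

theorem machine_computes_transduce:
  assumes "set s \<subseteq> {0..<k}"
  shows "runs_within machine (enc_string s) ((6 * max_word + 11) * length s ^ 2 + (6 * max_word + 11))
           (transduce [] s)"
proof -
  have init: "init machine (enc_string s) = (to_nat (Read []), [], map Suc s @ tape_tail False [] [])"
    by (simp add: init_def machine_def enc_string_def tape_tail_def)
  have "\<forall>a\<in>set s. a < k"
    using assms by auto
  then obtain n c where "n \<le> run_time (length s) 0"
    and "reaches machine (to_nat (Read []), [], map Suc s @ tape_tail False [] []) n c"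
    and "halted machine c" "tape_output c = transduce [] s"
    using run_machine[OF Nil_in_Q, of s "[]" "[]" False "[]"] by (auto simp: blank_def)
  then show ?thesis
    using init run_time_bound[of "length s"] by (intro runs_withinI[of _ _ n c]) simp_all
qed

end

section \<open>The approximation scheme\<close>

lemma set_enc_flips: "set (enc_flips fs) \<subseteq> {1, 2}"
  by (induction fs) (auto simp: enc_flips_def)

lemma enc_flips_append: "enc_flips (fs @ gs) = enc_flips fs @ enc_flips gs"
  by (simp add: enc_flips_def)

lemma card_set_le: "set s \<subseteq> {0..<k} \<Longrightarrow> card (set s) \<le> k"
  using card_mono[of "{0..<k}" "set s"] by simp

lemma buffered_grouping_machine:
  assumes "2 \<le> k" "k < K"
  shows "\<exists>M c e. wf_tm M \<and> (\<forall>s. set s \<subseteq> {0..<k} \<longrightarrow>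
           runs_within M (enc_string s) (c * length s ^ e + c) (enc_flips (buffered_grouping K s)))"
proof -
  let ?Q = "{X. set X \<subseteq> {0..<k} \<and> length X \<le> K}"
  interpret transducer k ?Q "\<lambda>X c. snd (buffer_step K X c)" "\<lambda>X c. enc_flips (fst (buffer_step K X c))"
    "\<lambda>X. enc_flips (optimal_grouping X)"
  proof
    fix X c
    assume "X \<in> ?Q" "c < k"
    then show "snd (buffer_step K X c) \<in> ?Q"
      using buffer_step_bound(1)[of X K k c] card_set_le[of X k] assms(2) set_snd_buffer_step by auto
  qed (use assms(1) set_enc_flips finite_lists_length_le[of "{0..<k}" K] in auto)
  have "transduce X r = enc_flips (fst (buffered K X r) @ optimal_grouping (snd (buffered K X r)))" for X r
    by (induction r arbitrary: X) (simp_all add: enc_flips_append)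
  then have "runs_within machine (enc_string s) ((6 * max_word + 11) * length s ^ 2 + (6 * max_word + 11))
      (enc_flips (buffered_grouping K s))" if "set s \<subseteq> {0..<k}" for s
    using machine_computes_transduce[of s] that by (auto simp: buffered_grouping_def)
  with wf_machine show ?thesis
    by blast
qed

theorem theorem3p7:
  shows "\<forall>k::nat. k \<ge> 2 \<longrightarrow> (\<forall>\<epsilon>::real. \<epsilon> > 0 \<longrightarrow>
     (\<exists>M c e. wf_tm M \<and>
        (\<forall>s. normalized s \<and> set s \<subseteq> {0..<k} \<longrightarrow>
           (\<exists>is. runs_within M (enc_string s) (c * length s ^ e + c) (enc_flips is) \<and>
                 (\<exists>u. flips is s = Some u \<and> length u = card (set s)) \<and>
                 real (length is) \<le> (1 + \<epsilon>) * real (dg s)))))"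
proof (intro allI impI)
  fix k :: nat and \<epsilon> :: real
  assume "2 \<le> k" "0 < \<epsilon>"
  obtain K where "k < K" and approx: "\<And>s. distinct_adj s \<Longrightarrow> card (set s) \<le> k \<Longrightarrow>
      real (length (buffered_grouping K s)) \<le> (1 + \<epsilon>) * real (dg s)"
    using buffered_grouping_approximation[OF \<open>0 < \<epsilon>\<close>] by blast
  obtain M c e where "wf_tm M" and runs: "\<And>s. set s \<subseteq> {0..<k} \<Longrightarrow>
      runs_within M (enc_string s) (c * length s ^ e + c) (enc_flips (buffered_grouping K s))"
    using buffered_grouping_machine[OF \<open>2 \<le> k\<close> \<open>k < K\<close>] by blast
  have "\<exists>is. runs_within M (enc_string s) (c * length s ^ e + c) (enc_flips is) \<and>
      (\<exists>u. flips is s = Some u \<and> length u = card (set s)) \<and> real (length is) \<le> (1 + \<epsilon>) * real (dg s)"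
    if "normalized s" "set s \<subseteq> {0..<k}" for s
    using that runs approx groups_buffered_grouping[of s K] card_set_le[of s k]
    by (intro exI[of _ "buffered_grouping K s"]) (auto simp: normalized_iff_distinct_adj groups_def)
  with \<open>wf_tm M\<close> show "\<exists>M c e. wf_tm M \<and> (\<forall>s. normalized s \<and> set s \<subseteq> {0..<k} \<longrightarrow>
      (\<exists>is. runs_within M (enc_string s) (c * length s ^ e + c) (enc_flips is) \<and>
        (\<exists>u. flips is s = Some u \<and> length u = card (set s)) \<and> real (length is) \<le> (1 + \<epsilon>) * real (dg s)))"
    by blast
qed

end
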